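(* Let $\mathcal{T}$ be a finite tree, $w:V(\mathcal{T})\to\mathbb{R}_{\ge0}$, $m=w(\mathcal{T})$, and let $c$ be a centroid of $(\mathcal{T},w)$. Then $$\mathtt{OPT}(\mathcal{T},w)\ge\frac m2+\frac{w(c)}2+\sum_{\mathcal{H}\in\mathbb{C}(\mathcal{T}-c)}\mathtt{OPT}(\mathcal{H},w).$$
   Context: $\mathbb{C}(G)$ denotes the set of connected components of a graph $G$. For a subgraph $\mathcal{H}$, $w(\mathcal{H})=\sum_{x\in V(\mathcal{H})}w(x)$, and $w$ also denotes its restriction to $V(\mathcal{H})$. A search tree on a tree $\mathcal{T}$ is a rooted tree $T$ with vertex set $V(\mathcal{T})$ defined recursively: its root is an arbitrary vertex $r$, and the children of $r$ are the roots of search trees built on the connected components of $\mathcal{T}-r$; a single-vertex tree has only itself as search tree. $\mathtt{cost}_w(T)=\sum_x w(x)\,\mathtt{depth}_T(x)$ with root depth $1$; $\mathtt{OPT}(\mathcal{T},w)$ is the minimum cost over all search trees on $\mathcal{T}$. A vertex $v$ is a centroid of $(\mathcal{T},w)$ if each component $\mathcal{H}$ of $\mathcal{T}-v$ has $w(\mathcal{H})\le w(\mathcal{T})/2$. *)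

theory Defs
  imports Main "HOL-Library.Multiset" Complex_Main
begin

text \<open>An undirected graph is given by a symmetric, irreflexive adjacency relation
  E on a vertex type; subgraphs are the induced subgraphs on vertex sets S.\<close>

definition reach :: "('a \<Rightarrow> 'a \<Rightarrow> bool) \<Rightarrow> 'a set \<Rightarrow> 'a \<Rightarrow> 'a \<Rightarrow> bool" where
  "reach E S = (\<lambda>x y. x \<in> S \<and> y \<in> S \<and> E x y)\<^sup>*\<^sup>*"

definition component :: "('a \<Rightarrow> 'a \<Rightarrow> bool) \<Rightarrow> 'a set \<Rightarrow> 'a \<Rightarrow> 'a set" where
  "component E S x = {y. reach E S x y}"

definition components :: "('a \<Rightarrow> 'a \<Rightarrow> bool) \<Rightarrow> 'a set \<Rightarrow> 'a set set" where
  "components E S = component E S ` S"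

definition edges :: "('a \<Rightarrow> 'a \<Rightarrow> bool) \<Rightarrow> 'a set \<Rightarrow> 'a set set" where
  "edges E S = {{x, y} | x y. x \<in> S \<and> y \<in> S \<and> E x y}"

definition is_tree :: "('a \<Rightarrow> 'a \<Rightarrow> bool) \<Rightarrow> 'a set \<Rightarrow> bool" where
  "is_tree E S \<longleftrightarrow> finite S \<and> S \<noteq> {} \<and> (\<forall>x\<in>S. \<forall>y\<in>S. reach E S x y)
     \<and> card (edges E S) = card S - 1"

datatype 'a rtree = Node 'a "'a rtree list"

inductive search_tree :: "('a \<Rightarrow> 'a \<Rightarrow> bool) \<Rightarrow> 'a set \<Rightarrow> 'a rtree \<Rightarrow> bool"
  for E where
  "\<lbrakk> r \<in> S; distinct Cs; set Cs = components E (S - {r});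
     list_all2 (search_tree E) Cs ts \<rbrakk> \<Longrightarrow> search_tree E S (Node r ts)"

fun cost_at :: "('a \<Rightarrow> real) \<Rightarrow> nat \<Rightarrow> 'a rtree \<Rightarrow> real" where
  "cost_at w d (Node r ts) = real d * w r + sum_list (map (cost_at w (Suc d)) ts)"

definition cost :: "('a \<Rightarrow> real) \<Rightarrow> 'a rtree \<Rightarrow> real" where
  "cost w t = cost_at w 1 t"

definition OPT :: "('a \<Rightarrow> 'a \<Rightarrow> bool) \<Rightarrow> 'a set \<Rightarrow> ('a \<Rightarrow> real) \<Rightarrow> real" where
  "OPT E S w = Inf {cost w t | t. search_tree E S t}"

definition centroid :: "('a \<Rightarrow> 'a \<Rightarrow> bool) \<Rightarrow> 'a set \<Rightarrow> ('a \<Rightarrow> real) \<Rightarrow> 'a \<Rightarrow> bool" where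
  "centroid E S w v \<longleftrightarrow> v \<in> S \<and>
     (\<forall>H \<in> components E (S - {v}). sum w H \<le> sum w S / 2)"

end

theory Submission
  imports Defs "HOL-Library.Disjoint_Sets"
begin

text \<open>
  Fix a search tree t on T with root r. The singleton {c} and the components of T - c partition T
  into connected parts H, and the cost of t splits into the costs of the restrictions of w to the
  parts. Deleting from t the vertices outside a connected part H yields a search tree on H whose
  vertices are no deeper, and strictly shallower if r is not in H; hence the part H contributes at
  least OPT(H) + w(H), or just OPT(H) for the part containing r. Since OPT({c}) = w(c), this gives
  cost(t) \<ge> w(c) + \<Sum>OPT(H) + m - w(H_r), where H_r is the part containing r. Either H_r = {c},
  or H_r is a component of T - c and w(H_r) \<le> m/2 by the centroid property; in both cases
  w(H_r) \<le> m/2 + w(c)/2.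
\<close>

lemma list_all2_set_left: "list_all2 P xs ys \<Longrightarrow> x \<in> set xs \<Longrightarrow> \<exists>y\<in>set ys. P x y"
  by (induction rule: list_all2_induct) auto

lemma list_all2_set_right: "list_all2 P xs ys \<Longrightarrow> y \<in> set ys \<Longrightarrow> \<exists>x\<in>set xs. P x y"
  by (induction rule: list_all2_induct) auto

lemma sum_list_list_all2_eq:
  "list_all2 P xs ys \<Longrightarrow> (\<And>x y. y \<in> set ys \<Longrightarrow> P x y \<Longrightarrow> f x = g y)
    \<Longrightarrow> (\<Sum>x\<leftarrow>xs. f x) = (\<Sum>y\<leftarrow>ys. g y)"
  by (induction rule: list_all2_induct) fastforce+

lemma sum_list_map_sum: "(\<Sum>t\<leftarrow>ts. \<Sum>i\<in>I. g i t) = (\<Sum>i\<in>I. \<Sum>t\<leftarrow>ts. g i t)"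
  by (induction ts) (simp_all add: sum.distrib)

lemma sum_partition_on:
  assumes "finite A" "partition_on A P"
  shows "sum f A = (\<Sum>p\<in>P. sum f p)"
proof -
  have "\<forall>p\<in>P. finite p"
    using partition_onD1[OF assms(2)] assms(1) by (auto intro: finite_subset)
  moreover have "\<forall>p\<in>P. \<forall>q\<in>P. p \<noteq> q \<longrightarrow> p \<inter> q = {}"
    using partition_onD2[OF assms(2)] by (auto simp: disjoint_def disjnt_def)
  ultimately have "sum f (\<Union>P) = (sum \<circ> sum) f P"
    by (rule sum.Union_disjoint)
  then show ?thesis
    using partition_onD1[OF assms(2)] by simp
qed

lemma sum_partition_on_containing:
  assumes "finite P" "partition_on A P" "p \<in> P" "x \<in> p"
  shows "(\<Sum>q\<in>P. if x \<in> q then g q else 0) = g p"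
proof -
  have "x \<in> q \<longleftrightarrow> q = p" if "q \<in> P" for q
    using partition_onD2[OF assms(2)] that assms(3,4) by (auto simp: disjoint_def disjnt_def)
  then have "(\<Sum>q\<in>P. if x \<in> q then g q else 0) = (\<Sum>q\<in>P. if q = p then g q else 0)"
    by (intro sum.cong) auto
  then show ?thesis
    using assms(1,3) by simp
qed

lemma sum_partition_on_indicator:
  assumes "finite P" "partition_on A P"
  shows "(\<Sum>p\<in>P. if x \<in> p then a else 0) = (if x \<in> A then a else 0)"
proof (cases "x \<in> A")
  case True
  then obtain p where "p \<in> P" "x \<in> p"
    using partition_onD1[OF assms(2)] by blast
  with True show ?thesis
    using sum_partition_on_containing[OF assms, of p x "\<lambda>_. a"] by simp
next
  case False
  then have "x \<notin> p" if "p \<in> P" for p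
    using that partition_onD1[OF assms(2)] by blast
  with False show ?thesis
    by simp
qed

lemma sum_partition_on_not_containing:
  fixes f :: "'a \<Rightarrow> 'b::ab_group_add"
  assumes "finite A" "partition_on A P" "x \<in> A"
  obtains p where "p \<in> P" "x \<in> p"
    "(\<Sum>q\<in>P. if x \<in> q then 0 else sum f q) = sum f A - sum f p"
proof -
  obtain p where p: "p \<in> P" "x \<in> p"
    using partition_onD1[OF assms(2)] assms(3) by blast
  have fin: "finite P"
    using assms(1,2) by (rule finite_elements)
  have "(\<Sum>q\<in>P. if x \<in> q then 0 else sum f q)
      = (\<Sum>q\<in>P. sum f q - (if x \<in> q then sum f q else 0))"
    by (rule sum.cong) auto
  also have "\<dots> = (\<Sum>q\<in>P. sum f q) - (\<Sum>q\<in>P. if x \<in> q then sum f q else 0)"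
    by (rule sum_subtractf)
  also have "\<dots> = sum f A - sum f p"
    using sum_partition_on[OF assms(1,2), of f] sum_partition_on_containing[OF fin assms(2) p, of "sum f"]
    by simp
  finally show ?thesis
    using that p by blast
qed

section \<open>Reachability and components\<close>

definition graph_connected :: "('a \<Rightarrow> 'a \<Rightarrow> bool) \<Rightarrow> 'a set \<Rightarrow> bool" where
  "graph_connected E H \<longleftrightarrow> (\<forall>x\<in>H. \<forall>y\<in>H. reach E H x y)"

lemma reach_refl: "reach E S x x"
  unfolding reach_def by simp

lemma reach_trans: "reach E S x y \<Longrightarrow> reach E S y z \<Longrightarrow> reach E S x z"
  unfolding reach_def by (rule rtranclp_trans)

lemma reach_sym:
  assumes "symp E"
  shows "reach E S x y \<Longrightarrow> reach E S y x"
  unfolding reach_def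
proof (induction rule: rtranclp_induct)
  case (step y z)
  then have "(\<lambda>x y. x \<in> S \<and> y \<in> S \<and> E x y) z y"
    using assms by (meson sympD)
  then show ?case
    using step.IH by (rule converse_rtranclp_into_rtranclp)
qed simp

lemma reach_mono: "S \<subseteq> S' \<Longrightarrow> reach E S x y \<Longrightarrow> reach E S' x y"
  unfolding reach_def by (erule rtranclp_mono[THEN predicate2D, rotated]) auto

lemma reach_mem: "reach E S x y \<Longrightarrow> x \<in> S \<Longrightarrow> y \<in> S"
  unfolding reach_def by (induction rule: rtranclp_induct) auto

lemma in_component_self: "x \<in> component E S x"
  unfolding component_def by (simp add: reach_refl)

lemma component_subset: "x \<in> S \<Longrightarrow> component E S x \<subseteq> S"
  unfolding component_def using reach_mem by fastforce

lemma component_eq: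
  assumes "symp E" "y \<in> component E S x"
  shows "component E S y = component E S x"
proof -
  have "reach E S x y" "reach E S y x"
    using assms reach_sym unfolding component_def by auto
  then have "reach E S y z \<longleftrightarrow> reach E S x z" for z
    using reach_trans by metis
  then show ?thesis
    unfolding component_def by blast
qed

lemma in_components: "x \<in> S \<Longrightarrow> component E S x \<in> components E S"
  unfolding components_def by simp

lemma Union_components: "\<Union> (components E S) = S"
  unfolding components_def using component_subset in_component_self by fastforce

lemma components_subset: "C \<in> components E S \<Longrightarrow> C \<subseteq> S"
  unfolding components_def by (erule imageE) (simp add: component_subset)

lemma components_nonempty: "C \<in> components E S \<Longrightarrow> C \<noteq> {}"
  unfolding components_def by (erule imageE) (use in_component_self in fast)

lemma partition_on_components:
  assumes "symp E"
  shows "partition_on S (components E S)"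
proof (rule partition_onI)
  show "\<Union> (components E S) = S"
    by (rule Union_components)
  show "disjnt p q" if "p \<in> components E S" "q \<in> components E S" "p \<noteq> q" for p q
  proof (rule ccontr)
    assume "\<not> disjnt p q"
    then obtain z where "z \<in> p" "z \<in> q"
      by (auto simp: disjnt_def)
    then have "p = component E S z" "q = component E S z"
      using that(1,2) component_eq[OF assms] unfolding components_def by auto
    with that(3) show False
      by simp
  qed
  show "{} \<notin> components E S"
    using components_nonempty by blast
qed

lemma reach_within_component: "reach E S x y \<Longrightarrow> reach E (component E S x) x y"
  unfolding reach_def
proof (induction rule: rtranclp_induct)
  case (step y z)
  have yz: "(\<lambda>x y. x \<in> S \<and> y \<in> S \<and> E x y) y z"
    using step(2) by simp
  have "y \<in> component E S x" "z \<in> component E S x"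
    using step(1) rtranclp.rtrancl_into_rtrancl[OF step(1) yz] unfolding component_def reach_def by auto
  with step.IH yz show ?case
    by (simp add: rtranclp.rtrancl_into_rtrancl)
qed simp

lemma graph_connected_components:
  assumes "symp E" "C \<in> components E S"
  shows "graph_connected E C"
  unfolding graph_connected_def
proof (intro ballI)
  obtain x where C: "C = component E S x"
    using assms(2) unfolding components_def by blast
  have from_x: "reach E C x y" if "y \<in> C" for y
    using that reach_within_component[of E S x y] unfolding C by (simp add: component_def)
  fix a b
  assume "a \<in> C" "b \<in> C"
  then have "reach E C a x" "reach E C x b"
    using from_x reach_sym[OF assms(1)] by blast+
  then show "reach E C a b"
    by (rule reach_trans)
qed

lemma graph_connected_subset_component:
  assumes "graph_connected E H" "H \<subseteq> S" "x \<in> H"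
  shows "H \<subseteq> component E S x"
proof
  fix y
  assume "y \<in> H"
  then have "reach E H x y"
    using assms(1,3) unfolding graph_connected_def by blast
  then have "reach E S x y"
    by (rule reach_mono[OF assms(2)])
  then show "y \<in> component E S x"
    unfolding component_def by simp
qed

lemma graph_connected_singleton: "graph_connected E {x}"
  unfolding graph_connected_def by (simp add: reach_refl)

section \<open>Costs of rooted trees\<close>

lemma cost_at_sum: "cost_at (\<lambda>x. \<Sum>i\<in>I. F i x) d t = (\<Sum>i\<in>I. cost_at (F i) d t)"
proof (induction t arbitrary: d)
  case (Node r ts)
  have "(\<Sum>t\<leftarrow>ts. cost_at (\<lambda>x. \<Sum>i\<in>I. F i x) (Suc d) t) = (\<Sum>t\<leftarrow>ts. \<Sum>i\<in>I. cost_at (F i) (Suc d) t)"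
    using Node.IH by (intro arg_cong[where f = sum_list] map_cong) auto
  then show ?case
    by (simp add: sum_list_map_sum sum_distrib_left sum.distrib)
qed

lemma cost_at_mono:
  assumes "\<And>x. f x \<le> g x"
  shows "cost_at f d t \<le> cost_at g d t"
proof (induction t arbitrary: d)
  case (Node r ts)
  have "(\<Sum>t\<leftarrow>ts. cost_at f (Suc d) t) \<le> (\<Sum>t\<leftarrow>ts. cost_at g (Suc d) t)"
    using Node.IH by (rule sum_list_mono)
  moreover have "real d * f r \<le> real d * g r"
    using assms by (simp add: mult_left_mono)
  ultimately show ?case
    by simp
qed

lemma cost_at_nonneg:
  assumes "\<And>x. 0 \<le> f x"
  shows "0 \<le> cost_at f d t"
proof (induction t arbitrary: d)
  case (Node r ts)
  have "0 \<le> (\<Sum>t\<leftarrow>ts. cost_at f (Suc d) t)"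
    using Node.IH by (intro sum_list_nonneg) auto
  then show ?case
    using assms by simp
qed

lemma cost_at_mono_depth:
  assumes "\<And>x. 0 \<le> f x"
  shows "d \<le> d' \<Longrightarrow> cost_at f d t \<le> cost_at f d' t"
proof (induction t arbitrary: d d')
  case (Node r ts)
  have "(\<Sum>t\<leftarrow>ts. cost_at f (Suc d) t) \<le> (\<Sum>t\<leftarrow>ts. cost_at f (Suc d') t)"
    using Node by (intro sum_list_mono) simp
  moreover have "real d * f r \<le> real d' * f r"
    using Node.prems assms by (simp add: mult_right_mono)
  ultimately show ?case
    by simp
qed

section \<open>Search trees\<close>

primrec rtree_root :: "'a rtree \<Rightarrow> 'a" where
  "rtree_root (Node r ts) = r"

lemma search_tree_root: "search_tree E S t \<Longrightarrow> rtree_root t \<in> S"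
  by (cases rule: search_tree.cases) auto

lemma search_tree_finite: "search_tree E S t \<Longrightarrow> finite S"
proof (induction rule: search_tree.induct)
  case (1 r S Cs ts)
  have "\<forall>C\<in>set Cs. finite C"
    using list_all2_set_left[OF 1(4)] by blast
  then have "finite (\<Union> (set Cs))"
    by (intro finite_Union) auto
  then show ?case
    using 1(3) by (simp add: Union_components)
qed

lemma search_tree_cost_cong:
  "search_tree E S t \<Longrightarrow> (\<And>x. x \<in> S \<Longrightarrow> f x = g x) \<Longrightarrow> cost_at f d t = cost_at g d t"
proof (induction arbitrary: d rule: search_tree.induct)
  case (1 r S Cs ts)
  have "cost_at f (Suc d) t = cost_at g (Suc d) t" if t: "t \<in> set ts" for t
  proof -
    obtain C where "C \<in> set Cs" "search_tree E C t"
      "(\<forall>x. x \<in> C \<longrightarrow> f x = g x) \<longrightarrow> (\<forall>d. cost_at f d t = cost_at g d t)"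
      using list_all2_set_right[OF 1(4) t] by blast
    moreover have "C \<subseteq> S"
      using \<open>C \<in> set Cs\<close> 1(3) components_subset by blast
    ultimately show ?thesis
      using "1.prems" by blast
  qed
  then show ?case
    using "1.prems" 1(1) by (simp cong: map_cong)
qed

lemma search_tree_cost_nonneg:
  assumes "search_tree E S t" "\<And>x. x \<in> S \<Longrightarrow> 0 \<le> f x"
  shows "0 \<le> cost_at f d t"
proof -
  have "cost_at f d t = cost_at (\<lambda>x. if x \<in> S then f x else 0) d t"
    using assms(1) by (rule search_tree_cost_cong) simp
  also have "0 \<le> \<dots>"
    using assms(2) by (intro cost_at_nonneg) simp
  finally show ?thesis .
qed

lemma search_tree_cost_Suc:
  assumes "symp E"
  shows "search_tree E S t \<Longrightarrow> cost_at f (Suc d) t = cost_at f d t + sum f S"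
proof (induction t arbitrary: S d)
  case (Node r ts)
  from Node.prems obtain Cs where r: "r \<in> S" and Cs: "distinct Cs" "set Cs = components E (S - {r})"
    and children: "list_all2 (search_tree E) Cs ts"
    by (cases rule: search_tree.cases) auto
  have fin: "finite S"
    using Node.prems by (rule search_tree_finite)
  have "(\<Sum>t\<leftarrow>ts. cost_at f (Suc (Suc d)) t - cost_at f (Suc d) t) = (\<Sum>C\<leftarrow>Cs. sum f C)"
    using children by (rule sum_list_list_all2_eq[symmetric]) (simp add: Node.IH)
  also have "\<dots> = sum f (S - {r})"
    using Cs fin sum_partition_on[OF _ partition_on_components[OF assms], of "S - {r}" f]
    by (simp add: sum_list_distinct_conv_sum_set)
  also have "\<dots> = sum f S - f r"
    using fin r by (simp add: sum_diff1)
  finally have "(\<Sum>t\<leftarrow>ts. cost_at f (Suc (Suc d)) t) = (\<Sum>t\<leftarrow>ts. cost_at f (Suc d) t) + sum f S - f r"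
    by (simp add: sum_list_subtractf)
  then show ?case
    by (simp add: ring_distribs)
qed

lemma search_tree_cost_ge:
  assumes "symp E" "search_tree E S t" "\<And>x. x \<in> S \<Longrightarrow> 0 \<le> f x"
  shows "real d * sum f S \<le> cost_at f d t"
proof (induction d)
  case 0
  show ?case
    using search_tree_cost_nonneg[OF assms(2,3)] by simp
next
  case (Suc d)
  then show ?case
    using search_tree_cost_Suc[OF assms(1,2)] by (simp add: algebra_simps)
qed

lemma search_tree_exists:
  assumes "finite S"
  shows "S \<noteq> {} \<Longrightarrow> \<exists>t. search_tree E S t"
  using assms
proof (induction S rule: finite_psubset_induct)
  case (psubset S)
  obtain r where r: "r \<in> S"
    using psubset.prems by blast
  have "finite (components E (S - {r}))"
    unfolding components_def using psubset.hyps(1) by simp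
  with finite_distinct_list obtain Cs where Cs: "set Cs = components E (S - {r})" "distinct Cs"
    by blast
  have "\<forall>C\<in>set Cs. \<exists>t. search_tree E C t"
  proof
    fix C
    assume "C \<in> set Cs"
    then have "C \<in> components E (S - {r})"
      using Cs(1) by simp
    then have "C \<subset> S" "C \<noteq> {}"
      using components_subset[of C E "S - {r}"] components_nonempty[of C E "S - {r}"] r by auto
    then show "\<exists>t. search_tree E C t"
      by (rule psubset.IH)
  qed
  from bchoice[OF this] obtain tr where "\<forall>C\<in>set Cs. search_tree E C (tr C)" ..
  then have "list_all2 (search_tree E) Cs (map tr Cs)"
    by (simp add: list_all2_map2 list_all2_same)
  then have "search_tree E S (Node r (map tr Cs))"
    by (rule search_tree.intros[OF r Cs(2,1)])
  then show ?case ..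
qed

text \<open>Several components of H - r may lie below the same child of the root; splitting the weight
  over the components keeps their total cost below that of the children.\<close>
lemma sum_cost_at_components_le:
  assumes "symp E" "distinct Ds" "set Ds = components E (H - {r})" "finite H"
    "\<And>x. 0 \<le> f x" "\<And>x. x \<notin> H \<Longrightarrow> f x = 0"
  shows "(\<Sum>D\<leftarrow>Ds. cost_at (\<lambda>x. if x \<in> D then f x else 0) d (Node r ts))
    \<le> (\<Sum>t\<leftarrow>ts. cost_at f (Suc d) t)"
proof -
  have "finite (set Ds)"
    by simp
  moreover have "partition_on (H - {r}) (set Ds)"
    using assms(3) partition_on_components[OF assms(1)] by simp
  ultimately have parts: "(\<Sum>D\<in>set Ds. if x \<in> D then f x else 0) = (if x \<in> H - {r} then f x else 0)" for x
    by (rule sum_partition_on_indicator)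
  have "(\<Sum>D\<leftarrow>Ds. cost_at (\<lambda>x. if x \<in> D then f x else 0) d (Node r ts))
      = cost_at (\<lambda>x. \<Sum>D\<in>set Ds. if x \<in> D then f x else 0) d (Node r ts)"
    using assms(2) by (simp add: cost_at_sum sum_list_distinct_conv_sum_set)
  also have "\<dots> = (\<Sum>t\<leftarrow>ts. cost_at (\<lambda>x. if x \<in> H - {r} then f x else 0) (Suc d) t)"
    unfolding parts by simp
  also have "\<dots> \<le> (\<Sum>t\<leftarrow>ts. cost_at f (Suc d) t)"
    using assms(5) by (intro sum_list_mono cost_at_mono) simp
  finally show ?thesis .
qed

lemma search_tree_glue_at_root:
  assumes "symp E" "finite H" "r \<in> H" "\<And>x. 0 \<le> f x" "\<And>x. x \<notin> H \<Longrightarrow> f x = 0"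
    and parts: "\<And>D g. D \<in> components E (H - {r}) \<Longrightarrow> (\<And>x. 0 \<le> g x) \<Longrightarrow> (\<And>x. x \<notin> D \<Longrightarrow> g x = 0)
      \<Longrightarrow> \<exists>t'. search_tree E D t' \<and> cost_at g (Suc d) t' \<le> cost_at g d (Node r ts)"
  shows "\<exists>t'. search_tree E H t' \<and> cost_at f d t' \<le> cost_at f d (Node r ts)"
proof -
  have "finite (components E (H - {r}))"
    unfolding components_def using assms(2) by simp
  then obtain Ds where Ds: "set Ds = components E (H - {r})" "distinct Ds"
    by (blast dest: finite_distinct_list)
  define fD where "fD D x = (if x \<in> D then f x else 0)" for D x
  have "\<forall>D\<in>set Ds. \<exists>t'. search_tree E D t' \<and> cost_at f (Suc d) t' \<le> cost_at (fD D) d (Node r ts)"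
  proof
    fix D
    assume "D \<in> set Ds"
    then have D: "D \<in> components E (H - {r})"
      using Ds(1) by simp
    have "\<And>x. 0 \<le> fD D x" "\<And>x. x \<notin> D \<Longrightarrow> fD D x = 0"
      using assms(4) unfolding fD_def by auto
    then obtain t' where t': "search_tree E D t'" "cost_at (fD D) (Suc d) t' \<le> cost_at (fD D) d (Node r ts)"
      using parts[OF D] by blast
    moreover have "cost_at f (Suc d) t' = cost_at (fD D) (Suc d) t'"
      using t'(1) by (rule search_tree_cost_cong) (simp add: fD_def)
    ultimately show "\<exists>t'. search_tree E D t' \<and> cost_at f (Suc d) t' \<le> cost_at (fD D) d (Node r ts)"
      by auto
  qed
  from bchoice[OF this] obtain tr where tr: "\<forall>D\<in>set Ds. search_tree E D (tr D)
      \<and> cost_at f (Suc d) (tr D) \<le> cost_at (fD D) d (Node r ts)" ..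
  then have "list_all2 (search_tree E) Ds (map tr Ds)"
    by (simp add: list_all2_map2 list_all2_same)
  then have "search_tree E H (Node r (map tr Ds))"
    by (rule search_tree.intros[OF assms(3) Ds(2,1)])
  moreover have "(\<Sum>D\<leftarrow>Ds. cost_at f (Suc d) (tr D)) \<le> (\<Sum>D\<leftarrow>Ds. cost_at (fD D) d (Node r ts))"
    using tr by (intro sum_list_mono) simp
  moreover have "\<dots> \<le> (\<Sum>t\<leftarrow>ts. cost_at f (Suc d) t)"
    unfolding fD_def using sum_cost_at_components_le[OF assms(1) Ds(2,1) assms(2,4,5)] .
  ultimately show ?thesis
    by (intro exI[of _ "Node r (map tr Ds)"]) (simp add: o_def)
qed

text \<open>The tree t' is t with the vertices outside H deleted: no vertex of H gets deeper,
  and all of them get shallower when the root of t is deleted.\<close>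
lemma search_tree_restrict:
  assumes "symp E"
  shows "search_tree E S t \<Longrightarrow> graph_connected E H \<Longrightarrow> H \<noteq> {} \<Longrightarrow> H \<subseteq> S
    \<Longrightarrow> (\<And>x. 0 \<le> f x) \<Longrightarrow> (\<And>x. x \<notin> H \<Longrightarrow> f x = 0)
    \<Longrightarrow> \<exists>t'. search_tree E H t' \<and> cost_at f (if rtree_root t \<in> H then d else Suc d) t' \<le> cost_at f d t"
proof (induction t arbitrary: S H f d)
  case (Node r ts)
  from Node.prems(1) obtain Cs where Cs: "set Cs = components E (S - {r})"
    and children: "list_all2 (search_tree E) Cs ts"
    by (cases rule: search_tree.cases) auto
  have child: "\<exists>t'. search_tree E H' t' \<and> cost_at f' (Suc d) t' \<le> cost_at f' d (Node r ts)"
    if H': "graph_connected E H'" "H' \<noteq> {}" "H' \<subseteq> S - {r}"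
      and f': "\<And>x. 0 \<le> f' x" "\<And>x. x \<notin> H' \<Longrightarrow> f' x = 0" for H' f'
  proof -
    obtain x where x: "x \<in> H'"
      using H'(2) by blast
    define C where "C = component E (S - {r}) x"
    have "H' \<subseteq> C" "C \<in> set Cs"
      using graph_connected_subset_component[OF H'(1,3) x] x H'(3) Cs
      unfolding C_def by (auto intro: in_components)
    then obtain tC where tC: "tC \<in> set ts" "search_tree E C tC"
      using list_all2_set_left[OF children] by blast
    obtain t' where t': "search_tree E H' t'"
      "cost_at f' (if rtree_root tC \<in> H' then Suc d else Suc (Suc d)) t' \<le> cost_at f' (Suc d) tC"
      using Node.IH[where H = H' and f = f' and d = "Suc d", OF tC H'(1,2) \<open>H' \<subseteq> C\<close> f'] by blast
    have "cost_at f' (Suc d) t' \<le> cost_at f' (if rtree_root tC \<in> H' then Suc d else Suc (Suc d)) t'"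
      using f'(1) by (rule cost_at_mono_depth) simp
    also have "\<dots> \<le> cost_at f' (Suc d) tC"
      by (fact t'(2))
    also have "\<dots> \<le> (\<Sum>t\<leftarrow>ts. cost_at f' (Suc d) t)"
      using tC(1) f'(1) by (intro member_le_sum_list) (auto intro: cost_at_nonneg)
    also have "\<dots> = cost_at f' d (Node r ts)"
      using H'(3) f'(2) by auto
    finally show ?thesis
      using t'(1) by blast
  qed
  show ?case
  proof (cases "r \<in> H")
    case False
    then have "H \<subseteq> S - {r}"
      using Node.prems(4) by blast
    with False show ?thesis
      using child[OF Node.prems(2,3) _ Node.prems(5,6)] by simp
  next
    case True
    have "\<exists>t'. search_tree E H t' \<and> cost_at f d t' \<le> cost_at f d (Node r ts)"
    proof (rule search_tree_glue_at_root[OF assms _ True Node.prems(5,6)])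
      show "finite H"
        using search_tree_finite[OF Node.prems(1)] Node.prems(4) finite_subset by blast
      fix D and g :: "'a \<Rightarrow> real"
      assume D: "D \<in> components E (H - {r})" and g: "\<And>x. 0 \<le> g x" "\<And>x. x \<notin> D \<Longrightarrow> g x = 0"
      have "D \<subseteq> S - {r}"
        using components_subset[OF D] Node.prems(4) by blast
      then show "\<exists>t'. search_tree E D t' \<and> cost_at g (Suc d) t' \<le> cost_at g d (Node r ts)"
        using child[where f' = g, OF graph_connected_components[OF assms D] components_nonempty[OF D] _ g]
        by blast
    qed
    with True show ?thesis
      by simp
  qed
qed

lemma OPT_le_cost:
  assumes "search_tree E S t" "\<forall>x\<in>S. 0 \<le> w x"
  shows "OPT E S w \<le> cost w t"
  unfolding OPT_def
proof (rule cInf_lower)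
  show "cost w t \<in> {cost w t |t. search_tree E S t}"
    using assms(1) by blast
  show "bdd_below {cost w t |t. search_tree E S t}"
    using assms(2) search_tree_cost_nonneg unfolding cost_def by (fastforce intro: bdd_belowI)
qed

lemma OPT_greatest:
  assumes "finite S" "S \<noteq> {}" "\<And>t. search_tree E S t \<Longrightarrow> a \<le> cost w t"
  shows "a \<le> OPT E S w"
  unfolding OPT_def
  using search_tree_exists[OF assms(1,2)] assms(3) by (fastforce intro: cInf_greatest)

lemma sum_le_OPT:
  assumes "symp E" "finite S" "S \<noteq> {}" "\<forall>x\<in>S. 0 \<le> w x"
  shows "sum w S \<le> OPT E S w"
proof (rule OPT_greatest[OF assms(2,3)])
  fix t
  assume "search_tree E S t"
  then have "real 1 * sum w S \<le> cost_at w 1 t"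
    using assms(4) by (intro search_tree_cost_ge[OF assms(1)]) auto
  then show "sum w S \<le> cost w t"
    unfolding cost_def by simp
qed

section \<open>Lower bound via a partition into connected parts\<close>

lemma cost_ge_OPT_part:
  assumes "symp E" "search_tree E S (Node r ts)" "graph_connected E H" "H \<noteq> {}" "H \<subseteq> S"
    "\<forall>x\<in>S. 0 \<le> w x"
  shows "OPT E H w + (if r \<in> H then 0 else sum w H) \<le> cost (\<lambda>x. if x \<in> H then w x else 0) (Node r ts)"
proof -
  define f where "f x = (if x \<in> H then w x else 0)" for x
  have f: "\<And>x. 0 \<le> f x" "\<And>x. x \<notin> H \<Longrightarrow> f x = 0"
    using assms(5,6) unfolding f_def by auto
  obtain t' where t': "search_tree E H t'" "cost_at f (if r \<in> H then 1 else Suc 1) t' \<le> cost f (Node r ts)"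
    using search_tree_restrict[where f = f and d = 1, OF assms(1-5) f] unfolding cost_def by auto
  have "cost_at f 1 t' = cost w t'"
    unfolding cost_def using t'(1) by (rule search_tree_cost_cong) (simp add: f_def)
  moreover have "cost_at f (Suc 1) t' = cost_at f 1 t' + sum w H"
    using search_tree_cost_Suc[OF assms(1) t'(1)] unfolding f_def by simp
  moreover have "OPT E H w \<le> cost w t'"
    using t'(1) assms(5,6) by (intro OPT_le_cost) auto
  ultimately show ?thesis
    using t'(2) unfolding f_def[symmetric] by (cases "r \<in> H") auto
qed

lemma cost_ge_sum_OPT_partition:
  assumes "symp E" "search_tree E S (Node r ts)" "partition_on S P" "\<forall>H\<in>P. graph_connected E H"
    "\<forall>x\<in>S. 0 \<le> w x"
  shows "(\<Sum>H\<in>P. OPT E H w + (if r \<in> H then 0 else sum w H)) \<le> cost w (Node r ts)"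
proof -
  have finP: "finite P"
    using search_tree_finite[OF assms(2)] assms(3) by (rule finite_elements)
  have "OPT E H w + (if r \<in> H then 0 else sum w H) \<le> cost (\<lambda>x. if x \<in> H then w x else 0) (Node r ts)"
    if "H \<in> P" for H
  proof (rule cost_ge_OPT_part[OF assms(1,2) _ _ _ assms(5)])
    show "graph_connected E H"
      using assms(4) that by blast
    show "H \<noteq> {}" "H \<subseteq> S"
      using partition_onD3[OF assms(3)] partition_onD1[OF assms(3)] that by auto
  qed
  then have "(\<Sum>H\<in>P. OPT E H w + (if r \<in> H then 0 else sum w H))
      \<le> (\<Sum>H\<in>P. cost (\<lambda>x. if x \<in> H then w x else 0) (Node r ts))"
    by (rule sum_mono)
  also have "\<dots> = cost (\<lambda>x. \<Sum>H\<in>P. if x \<in> H then w x else 0) (Node r ts)"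
    unfolding cost_def by (rule cost_at_sum[symmetric])
  also have "\<dots> = cost w (Node r ts)"
    unfolding cost_def using assms(2)
    by (rule search_tree_cost_cong) (simp add: sum_partition_on_indicator[OF finP assms(3)])
  finally show ?thesis .
qed

lemma centroid_cost_lower_bound:
  assumes "symp E" "search_tree E T t" "\<forall>x\<in>T. 0 \<le> w x" "centroid E T w c"
  shows "sum w T / 2 + w c / 2 + (\<Sum>H\<in>components E (T - {c}). OPT E H w) \<le> cost w t"
proof -
  obtain r ts where t: "t = Node r ts"
    by (cases t)
  define P where "P = insert {c} (components E (T - {c}))"
  have finT: "finite T" and rT: "r \<in> T" and cT: "c \<in> T"
    using search_tree_finite[OF assms(2)] search_tree_root[OF assms(2)] assms(4)
    unfolding t centroid_def by auto
  have "{c} \<notin> components E (T - {c})"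
    using components_subset by blast
  have P: "partition_on T P"
    unfolding P_def using partition_on_components[OF assms(1), of "T - {c}"] cT
    by (subst partition_on_insert) (auto simp: disjnt_def Union_components)
  have conn: "\<forall>H\<in>P. graph_connected E H"
    unfolding P_def using graph_connected_singleton graph_connected_components[OF assms(1)] by auto
  obtain Hr where Hr: "Hr \<in> P" "r \<in> Hr"
    "(\<Sum>H\<in>P. if r \<in> H then 0 else sum w H) = sum w T - sum w Hr"
    using sum_partition_on_not_containing[OF finT P rT] by blast
  have "sum w Hr \<le> sum w T / 2 + w c / 2"
  proof (cases "Hr = {c}")
    case True
    have "w c \<le> sum w T"
      using cT assms(3) finT by (intro member_le_sum) auto
    with True show ?thesis
      by simp
  next
    case False
    then have "sum w Hr \<le> sum w T / 2"
      using Hr(1) assms(4) unfolding P_def centroid_def by auto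
    then show ?thesis
      using assms(3) cT by fastforce
  qed
  moreover have "w c \<le> OPT E {c} w"
    using sum_le_OPT[OF assms(1), of "{c}" w] assms(3) cT by simp
  moreover have "(\<Sum>H\<in>P. OPT E H w + (if r \<in> H then 0 else sum w H)) \<le> cost w t"
    using cost_ge_sum_OPT_partition[OF assms(1) _ P conn assms(3)] assms(2) unfolding t by blast
  moreover have "(\<Sum>H\<in>P. OPT E H w + (if r \<in> H then 0 else sum w H))
      = OPT E {c} w + (\<Sum>H\<in>components E (T - {c}). OPT E H w) + (sum w T - sum w Hr)"
    using Hr(3) \<open>{c} \<notin> components E (T - {c})\<close> finT
    unfolding P_def components_def by (simp add: sum.distrib)
  ultimately show ?thesis
    by linarith
qed

theorem lemma1:
  fixes E :: "'a \<Rightarrow> 'a \<Rightarrow> bool" and T :: "'a set" and w :: "'a \<Rightarrow> real" and c :: 'a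
  assumes "symp E" and "irreflp E"
    and "is_tree E T"
    and "\<forall>x\<in>T. w x \<ge> 0"
    and "centroid E T w c"
  shows "OPT E T w \<ge> sum w T / 2 + w c / 2 + (\<Sum>H \<in> components E (T - {c}). OPT E H w)"
proof -
  have "finite T" "T \<noteq> {}"
    using assms(3) unfolding is_tree_def by auto
  then show ?thesis
    using centroid_cost_lower_bound[OF assms(1) _ assms(4,5)] by (intro OPT_greatest)
qed

end
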